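(* Let $\mathbf{Y}=\boldsymbol{\xi}+\boldsymbol{\omega}(\boldsymbol{\delta}U+\mathbf{Z})\sim\mathcal{MMNE}_p(\boldsymbol{\xi},\mathbf{\Omega},\boldsymbol{\delta})$ with $\boldsymbol{\delta}\neq\mathbf{0}$, where $U$ is standard exponential. Put $\mathbf{\Sigma}_{\mathbf{Y}}=\mathbf{\Omega}-\boldsymbol{\omega}\boldsymbol{\delta}\boldsymbol{\delta}^\top\boldsymbol{\omega}$, $\eta=\sqrt{\boldsymbol{\delta}^\top\boldsymbol{\omega}\mathbf{\Sigma}_{\mathbf{Y}}^{-1}\boldsymbol{\omega}\boldsymbol{\delta}}$ and, for $\mathbf{y}\in\mathbb{R}^p$, $A=A(\mathbf{y})=\eta^{-1}[\boldsymbol{\delta}^\top\boldsymbol{\omega}\mathbf{\Sigma}_{\mathbf{Y}}^{-1}(\mathbf{y}-\boldsymbol{\xi})-1]$. Then the conditional distribution of $U$ given $\mathbf{Y}=\mathbf{y}$ is $\mathcal{TN}(\eta^{-1}A,\eta^{-2},(0,\infty))$. Furthermore, $$\mathrm{E}[U\mid\mathbf{Y}=\mathbf{y}]=\eta^{-1}\Big(A+\frac{\phi(A)}{\Phi(A)}\Big),$$ and for $k\in\{2,3,\dots\}$, $$\mathrm{E}[U^k\mid\mathbf{Y}=\mathbf{y}]=A\eta^{-1}\,\mathrm{E}[U^{k-1}\mid\mathbf{Y}=\mathbf{y}]+(k-1)\eta^{-2}\,\mathrm{E}[U^{k-2}\mid\mathbf{Y}=\mathbf{y}].$$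
   Context: Let $\boldsymbol{\xi}\in\mathbb{R}^p$, $\mathbf{\Omega}$ a $p\times p$ symmetric positive definite matrix, $\boldsymbol{\omega}=\mathrm{diag}(\mathbf{\Omega}_{11}^{1/2},\dots,\mathbf{\Omega}_{pp}^{1/2})$, $\overline{\mathbf{\Omega}}=\boldsymbol{\omega}^{-1}\mathbf{\Omega}\boldsymbol{\omega}^{-1}$, $\boldsymbol{\delta}\in\mathbb{R}^p$ with $\overline{\mathbf{\Omega}}-\boldsymbol{\delta}\boldsymbol{\delta}^\top$ positive definite. $\mathcal{MMNE}_p(\boldsymbol{\xi},\mathbf{\Omega},\boldsymbol{\delta})$ denotes the law of $\boldsymbol{\xi}+\boldsymbol{\omega}(\boldsymbol{\delta}U+\mathbf{Z})$ where $U$ has density $e^{-u}$, $u>0$, and $\mathbf{Z}\sim\mathcal{N}_p(\mathbf{0},\overline{\mathbf{\Omega}}-\boldsymbol{\delta}\boldsymbol{\delta}^\top)$ is independent of $U$. $\mathcal{TN}(a,b,(0,\infty))$ is the normal distribution with mean $a$ and variance $b$ truncated to $(0,\infty)$. $\phi$ and $\Phi$ are the standard normal density and CDF. *)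

theory Defs
  imports "HOL-Probability.Probability"
begin

definition std_normal_cdf :: "real \<Rightarrow> real" where
  "std_normal_cdf x = measure (density lborel std_normal_density) {..x}"

definition mvn_density :: "real^'p \<Rightarrow> real^'p^'p \<Rightarrow> real^'p \<Rightarrow> real" where
  "mvn_density \<mu> S x =
     exp (- ((x - \<mu>) \<bullet> (matrix_inv S *v (x - \<mu>))) / 2) /
     (sqrt ((2 * pi) ^ CARD('p) * det S))"

text \<open>Truncated normal \<open>TN(a, b, (0,\<infinity>))\<close>: mean a, variance b, truncated to \<open>(0,\<infinity>)\<close>.\<close>
definition trunc_normal :: "real \<Rightarrow> real \<Rightarrow> real measure" where
  "trunc_normal a b = density lborel (\<lambda>u. ennreal
     (indicator {0<..} u * normal_density a (sqrt b) u / (1 - std_normal_cdf (- a / sqrt b))))"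

definition pos_def_mat :: "real^'p^'p \<Rightarrow> bool" where
  "pos_def_mat S \<longleftrightarrow> transpose S = S \<and> (\<forall>x. x \<noteq> 0 \<longrightarrow> x \<bullet> (S *v x) > 0)"

definition omega_diag :: "real^'p^'p \<Rightarrow> real^'p^'p" where
  "omega_diag \<Omega> = (\<chi> i j. if i = j then sqrt (\<Omega> $ i $ i) else 0)"

definition corr_mat :: "real^'p^'p \<Rightarrow> real^'p^'p" where
  "corr_mat \<Omega> = matrix_inv (omega_diag \<Omega>) ** \<Omega> ** matrix_inv (omega_diag \<Omega>)"

definition outer :: "real^'p \<Rightarrow> real^'p \<Rightarrow> real^'p^'p" where
  "outer a b = (\<chi> i j. a $ i * b $ j)"

end

(*
  Write Y = xi + omega (delta U + Z) in the coordinates w = omega^-1 (Y - xi). On u > 0 the joint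
  density of (U, w) is exp (-u) phi_Sbar (w - u delta), where Sbar = corr_mat Omega - delta delta^T.
  Expanding the quadratic form and completing the square in u shows that, for fixed w, this is a
  multiple of the N(a, 1/e) density restricted to (0, oo), with e = delta^T Sbar^-1 delta = eta^2 and
  a = (delta^T Sbar^-1 w - 1) / e = A / eta. Hence the conditional law of U given Y is this truncated
  normal law. Its moments are ratios J_k / J_0 of J_k = int_0^oo u^k phi_{a,s}(u) du, and integrating
  the derivative of u^k phi_{a,s} over (0, oo) gives J_(k+1) = a J_k + s^2 (k J_(k-1) + [k = 0] phi_{a,s}(0)):
  the case k = 0 is the formula for the conditional mean, the cases k >= 1 are the recursion.
*)

theory Submission
  imports Defs "HOL-Real_Asymp.Real_Asymp"
begin

section \<open>The standard normal distribution function\<close>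

lemma prob_space_std_normal: "prob_space (density lborel std_normal_density)"
  by (rule prob_space_normal_density) simp

lemma std_normal_cdf_bounds: "0 \<le> std_normal_cdf a" "std_normal_cdf a \<le> 1"
proof -
  interpret prob_space "density lborel std_normal_density" by (rule prob_space_std_normal)
  show "0 \<le> std_normal_cdf a" "std_normal_cdf a \<le> 1" unfolding std_normal_cdf_def by simp_all
qed

lemma nn_integral_std_normal_atMost:
  "(\<integral>\<^sup>+x. ennreal (indicator {..a} x * std_normal_density x) \<partial>lborel) = ennreal (std_normal_cdf a)"
proof -
  interpret prob_space "density lborel std_normal_density" by (rule prob_space_std_normal)
  show ?thesis unfolding std_normal_cdf_def
    by (subst emeasure_eq_measure[symmetric], subst emeasure_density)
       (auto intro!: nn_integral_cong split: split_indicator)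
qed

lemma nn_integral_std_normal_greaterThan:
  "(\<integral>\<^sup>+x. ennreal (indicator {a<..} x * std_normal_density x) \<partial>lborel) = ennreal (1 - std_normal_cdf a)"
proof -
  interpret prob_space "density lborel std_normal_density" by (rule prob_space_std_normal)
  have "(\<integral>\<^sup>+x. ennreal (indicator {a<..} x * std_normal_density x) \<partial>lborel)
      = emeasure (density lborel std_normal_density) (space (density lborel std_normal_density) - {..a})"
    by (subst emeasure_density) (auto intro!: nn_integral_cong split: split_indicator)
  also have "\<dots> = ennreal (1 - std_normal_cdf a)"
    unfolding std_normal_cdf_def using prob_compl[of "{..a}"] by (simp add: emeasure_eq_measure)
  finally show ?thesis .
qed

lemma std_normal_cdf_minus: "1 - std_normal_cdf (- a) = std_normal_cdf a"
proof -
  have "ennreal (1 - std_normal_cdf (- a))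
      = (\<integral>\<^sup>+x. ennreal (indicator {-a<..} (0 + -1 * x) * std_normal_density (0 + -1 * x)) \<partial>lborel)"
    by (subst nn_integral_std_normal_greaterThan[symmetric], subst nn_integral_real_affine[of _ "-1" 0]) auto
  also have "\<dots> = (\<integral>\<^sup>+x. ennreal (indicator {..a} x * std_normal_density x) \<partial>lborel)"
    by (intro nn_integral_cong_AE AE_I[where N="{a}"]) (auto simp: std_normal_density_def split: split_indicator)
  finally show ?thesis
    using std_normal_cdf_bounds[of a] std_normal_cdf_bounds[of "- a"] by (simp add: nn_integral_std_normal_atMost)
qed

lemma std_normal_cdf_less_1: "std_normal_cdf a < 1"
proof (rule ccontr)
  assume "\<not> std_normal_cdf a < 1"
  then have "(\<integral>\<^sup>+x. ennreal (indicator {a<..} x * std_normal_density x) \<partial>lborel) = 0"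
    by (simp add: nn_integral_std_normal_greaterThan ennreal_eq_0_iff)
  then have "AE x in lborel. indicator {a<..} x * std_normal_density x = 0"
    by (subst (asm) nn_integral_0_iff_AE) auto
  then have "AE x in lborel. x \<notin> {a<..}"
    by eventually_elim (auto simp: std_normal_density_def split: split_indicator)
  then have "emeasure lborel {a<..} = 0"
    by (subst (asm) AE_iff_measurable[where N="{a<..}"]) auto
  moreover have "emeasure lborel {a<..a+1} \<le> emeasure lborel {a<..}"
    by (intro emeasure_mono) auto
  ultimately show False by simp
qed

lemma std_normal_cdf_pos: "0 < std_normal_cdf a"
  using std_normal_cdf_less_1[of "- a"] std_normal_cdf_minus[of a] by simp

lemma mono_std_normal_cdf: "mono std_normal_cdf"
proof
  fix x y :: real assume "x \<le> y"
  interpret prob_space "density lborel std_normal_density" by (rule prob_space_std_normal)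
  show "std_normal_cdf x \<le> std_normal_cdf y"
    unfolding std_normal_cdf_def using \<open>x \<le> y\<close> by (intro finite_measure_mono) auto
qed

lemma borel_measurable_std_normal_cdf[measurable]: "std_normal_cdf \<in> borel_measurable borel"
  by (rule borel_measurable_mono[OF mono_std_normal_cdf])

section \<open>Moments of the normal density on the positive half-line\<close>

lemma normal_density_eq_std_normal_density:
  "0 < s \<Longrightarrow> normal_density m s x = std_normal_density ((x - m) / s) / s"
  by (simp add: normal_density_def real_sqrt_mult power_divide field_simps)

lemma nn_integral_normal_density_greaterThan_0:
  assumes s: "0 < s"
  shows "(\<integral>\<^sup>+u. ennreal (indicator {0<..} u * normal_density m s u) \<partial>lborel)
       = ennreal (1 - std_normal_cdf (- m / s))"
proof -
  have "(\<integral>\<^sup>+u. ennreal (indicator {0<..} u * normal_density m s u) \<partial>lborel)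
      = ennreal \<bar>s\<bar> * (\<integral>\<^sup>+x. ennreal (indicator {0<..} (m + s * x) * normal_density m s (m + s * x)) \<partial>lborel)"
    using s by (intro nn_integral_real_affine) auto
  also have "\<dots> = (\<integral>\<^sup>+x. ennreal s * ennreal (indicator {0<..} (m + s * x) * normal_density m s (m + s * x)) \<partial>lborel)"
    using s by (subst nn_integral_cmult) auto
  also have "\<dots> = (\<integral>\<^sup>+x. ennreal (indicator {- m / s<..} x * std_normal_density x) \<partial>lborel)"
  proof (intro nn_integral_cong)
    fix x
    have e: "0 < m + s * x \<longleftrightarrow> - m / s < x" using s by (auto simp: field_simps)
    show "ennreal s * ennreal (indicator {0<..} (m + s * x) * normal_density m s (m + s * x))
        = ennreal (indicator {- m / s<..} x * std_normal_density x)"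
      using s by (simp add: normal_density_eq_std_normal_density[OF s] e ennreal_mult''[symmetric] split: split_indicator)
  qed
  finally show ?thesis by (simp add: nn_integral_std_normal_greaterThan)
qed

lemma integrable_power_normal_density:
  assumes s: "0 < s"
  shows "integrable lborel (\<lambda>u. u ^ n * normal_density m s u)"
proof -
  have "u ^ n * normal_density m s u
     = (\<Sum>k\<le>n. (of_nat (n choose k) * m ^ (n - k)) * (normal_density m s u * (u - m) ^ k))" for u
    using binomial_ring[of "u - m" m n] by (simp add: sum_distrib_left sum_distrib_right ac_simps)
  moreover have "integrable lborel
      (\<lambda>u. \<Sum>k\<le>n. (of_nat (n choose k) * m ^ (n - k)) * (normal_density m s u * (u - m) ^ k))"
    by (intro Bochner_Integration.integrable_sum integrable_mult_right integrable_normal_moment[OF s])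
  ultimately show ?thesis by simp
qed

lemma integral_atLeast_FTC_at_top:
  fixes F f :: "real \<Rightarrow> real"
  assumes deriv: "\<And>x. a \<le> x \<Longrightarrow> (F has_real_derivative f x) (at x)"
    and cont: "continuous_on {a..} f"
    and int: "set_integrable lborel {a..} f"
    and lim: "(F \<longlongrightarrow> 0) at_top"
  shows "(\<integral>x. indicator {a..} x * f x \<partial>lborel) = - F a"
proof -
  have "((\<lambda>y. \<integral>x. indicator {..y} x *\<^sub>R (indicator {a..} x *\<^sub>R f x) \<partial>lborel)
      \<longlongrightarrow> (\<integral>x. indicator {a..} x *\<^sub>R f x \<partial>lborel)) at_top"
    using int unfolding set_integrable_def by (intro tendsto_integral_at_top) simp_all
  moreover have "eventually (\<lambda>y. (\<integral>x. indicator {..y} x *\<^sub>R (indicator {a..} x *\<^sub>R f x) \<partial>lborel) = F y - F a) at_top"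
    unfolding eventually_at_top_linorder
  proof (intro exI allI impI)
    fix y assume "a \<le> y"
    have "(\<integral>x. indicator {..y} x *\<^sub>R (indicator {a..} x *\<^sub>R f x) \<partial>lborel) = (\<integral>x. indicator {a..y} x *\<^sub>R f x \<partial>lborel)"
      by (intro Bochner_Integration.integral_cong) (auto split: split_indicator)
    also have "\<dots> = F y - F a"
    proof (rule integral_FTC_atLeastAtMost[OF \<open>a \<le> y\<close>])
      show "continuous_on {a..y} f" using cont by (rule continuous_on_subset) auto
      show "(F has_vector_derivative f x) (at x within {a..y})" if "a \<le> x" for x
        using deriv[OF that] by (simp add: has_real_derivative_iff_has_vector_derivative[symmetric]
            has_field_derivative_at_within)
    qed
    finally show "(\<integral>x. indicator {..y} x *\<^sub>R (indicator {a..} x *\<^sub>R f x) \<partial>lborel) = F y - F a" .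
  qed
  ultimately have "((\<lambda>y. F y - F a) \<longlongrightarrow> (\<integral>x. indicator {a..} x * f x \<partial>lborel)) at_top"
    by (simp add: tendsto_cong)
  moreover have "((\<lambda>y. F y - F a) \<longlongrightarrow> 0 - F a) at_top"
    by (intro tendsto_intros lim)
  ultimately have "(\<integral>x. indicator {a..} x * f x \<partial>lborel) = 0 - F a"
    by (rule tendsto_unique[OF trivial_limit_at_top_linorder])
  then show ?thesis by simp
qed

definition normal_pos_moment :: "real \<Rightarrow> real \<Rightarrow> nat \<Rightarrow> real" where
  "normal_pos_moment m s n = (\<integral>u. indicator {0<..} u * u ^ n * normal_density m s u \<partial>lborel)"

lemma integrable_indicator_power_normal_density:
  "0 < s \<Longrightarrow> A \<in> sets borel \<Longrightarrow> integrable lborel (\<lambda>u. indicator A u * u ^ n * normal_density m s u)"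
  using integrable_mult_indicator[OF _ integrable_power_normal_density] by (simp add: mult.assoc)

lemma normal_pos_moment_0:
  assumes s: "0 < s"
  shows "normal_pos_moment m s 0 = 1 - std_normal_cdf (- m / s)"
proof -
  have "ennreal (normal_pos_moment m s 0)
      = (\<integral>\<^sup>+u. ennreal (indicator {0<..} u * normal_density m s u) \<partial>lborel)"
    unfolding normal_pos_moment_def
    using integrable_indicator_power_normal_density[OF s, of "{0<..}" 0 m]
    by (subst nn_integral_eq_integral) (auto split: split_indicator)
  moreover have "0 \<le> normal_pos_moment m s 0"
    unfolding normal_pos_moment_def by (intro integral_nonneg_AE AE_I2) (simp split: split_indicator)
  ultimately show ?thesis
    using std_normal_cdf_less_1[of "- m / s"]
    by (simp add: nn_integral_normal_density_greaterThan_0[OF s])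
qed

lemma has_real_derivative_power_gaussian:
  assumes s: "s \<noteq> 0"
  shows "((\<lambda>u. u ^ n * (c * exp (- (u - m)\<^sup>2 / (2 * s\<^sup>2)))) has_real_derivative
     real n * u ^ (n - 1) * (c * exp (- (u - m)\<^sup>2 / (2 * s\<^sup>2)))
       - u ^ n * (u - m) / s\<^sup>2 * (c * exp (- (u - m)\<^sup>2 / (2 * s\<^sup>2)))) (at u)"
proof -
  \<comment> \<open>the shape in which \<open>derivative_eq_intros\<close> leaves the derivative of the exponent\<close>
  have "E * (s\<^sup>2 * (2 * u - 2 * m)) * c * w / (2 * s ^ 4) = w * (u - m) * (c * E) / s\<^sup>2" for E w
    using s by (simp add: field_simps power2_eq_square power4_eq_xxxx)
  then show ?thesis
    using s by (auto intro!: derivative_eq_intros)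
qed

(* Integration by parts against u ^ n; the boundary term at 0 survives only for n = 0. *)
lemma normal_pos_moment_Suc:
  assumes s: "0 < s"
  shows "normal_pos_moment m s (Suc n)
       = m * normal_pos_moment m s n + s\<^sup>2 * (real n * normal_pos_moment m s (n - 1) + 0 ^ n * normal_density m s 0)"
proof -
  let ?N = "normal_density m s" and ?J = "normal_pos_moment m s"
  define f where "f u = real n * u ^ (n - 1) * ?N u - u ^ n * (u - m) / s\<^sup>2 * ?N u" for u
  have f_eq: "f u = real n * (u ^ (n - 1) * ?N u) - (1 / s\<^sup>2) * (u ^ Suc n * ?N u) + (m / s\<^sup>2) * (u ^ n * ?N u)" for u
    unfolding f_def by (simp add: diff_divide_distrib algebra_simps)
  have J: "has_bochner_integral lborel (\<lambda>u. indicator {0<..} u * u ^ k * ?N u) (?J k)" for k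
    unfolding normal_pos_moment_def
    using integrable_indicator_power_normal_density[OF s] by (simp add: has_bochner_integral_integrable)
  have "has_bochner_integral lborel
      (\<lambda>u. real n * (indicator {0<..} u * u ^ (n - 1) * ?N u) - (1 / s\<^sup>2) * (indicator {0<..} u * u ^ Suc n * ?N u)
        + (m / s\<^sup>2) * (indicator {0<..} u * u ^ n * ?N u))
      (real n * ?J (n - 1) - (1 / s\<^sup>2) * ?J (Suc n) + (m / s\<^sup>2) * ?J n)"
    by (intro has_bochner_integral_add has_bochner_integral_diff has_bochner_integral_mult_right J)
  then have "(\<integral>u. indicator {0<..} u * f u \<partial>lborel) = real n * ?J (n - 1) - (1 / s\<^sup>2) * ?J (Suc n) + (m / s\<^sup>2) * ?J n"
    unfolding f_eq by (simp add: has_bochner_integral_iff algebra_simps)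
  moreover have "(\<integral>u. indicator {0<..} u * f u \<partial>lborel) = (\<integral>u. indicator {0..} u * f u \<partial>lborel)"
    unfolding f_def by (intro integral_cong_AE AE_I[where N="{0}"]) (auto split: split_indicator)
  moreover have "(\<integral>u. indicator {0..} u * f u \<partial>lborel) = - (0 ^ n * ?N 0)"
  proof (rule integral_atLeast_FTC_at_top[where F="\<lambda>u. u ^ n * ?N u", simplified])
    show "((\<lambda>u. u ^ n * ?N u) has_real_derivative f x) (at x)" for x
      unfolding f_def normal_density_def by (rule has_real_derivative_power_gaussian) (use s in simp)
    show "continuous_on {0..} f"
      unfolding f_def normal_density_def by (intro continuous_intros) (use s in auto)
    have "integrable lborel f"
      unfolding f_eq by (intro Bochner_Integration.integrable_add Bochner_Integration.integrable_diff
          integrable_mult_right integrable_power_normal_density s)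
    then show "set_integrable lborel {0..} f"
      unfolding set_integrable_def by (rule integrable_mult_indicator[rotated]) simp
    show "((\<lambda>u. u ^ n * ?N u) \<longlongrightarrow> 0) at_top"
      unfolding normal_density_def using s by real_asymp
  qed
  ultimately have "real n * ?J (n - 1) - (1 / s\<^sup>2) * ?J (Suc n) + (m / s\<^sup>2) * ?J n = - (0 ^ n * ?N 0)"
    by linarith
  then show ?thesis
    using s by (simp add: field_simps)
qed

section \<open>The truncated normal law\<close>

definition trunc_normal_density :: "real \<Rightarrow> real \<Rightarrow> real \<Rightarrow> real" where
  "trunc_normal_density a b u =
     indicator {0<..} u * normal_density a (sqrt b) u / (1 - std_normal_cdf (- a / sqrt b))"

lemma trunc_normal_eq_density:
  "trunc_normal a b = density lborel (\<lambda>u. ennreal (trunc_normal_density a b u))"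
  by (simp add: trunc_normal_def trunc_normal_density_def)

lemma sets_trunc_normal[measurable_cong, simp]: "sets (trunc_normal a b) = sets borel"
  by (simp add: trunc_normal_def)

lemma space_trunc_normal[simp]: "space (trunc_normal a b) = UNIV"
  by (simp add: trunc_normal_def)

lemma trunc_normal_density_nonneg: "0 \<le> trunc_normal_density a b u"
  unfolding trunc_normal_density_def using std_normal_cdf_less_1[of "- a / sqrt b"]
  by (simp split: split_indicator)

lemma borel_measurable_trunc_normal_density[measurable (raw)]:
  assumes [measurable]: "f \<in> borel_measurable M" "g \<in> borel_measurable M"
  shows "(\<lambda>x. trunc_normal_density (f x) b (g x)) \<in> borel_measurable M"
  unfolding trunc_normal_density_def normal_density_def by measurable

lemma trunc_normal_density_eq_normal_pos_moment:
  "0 < b \<Longrightarrow> trunc_normal_density a b u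
     = indicator {0<..} u * normal_density a (sqrt b) u / normal_pos_moment a (sqrt b) 0"
  by (simp add: trunc_normal_density_def normal_pos_moment_0)

lemma nn_integral_trunc_normal_density:
  assumes b: "0 < b"
  shows "(\<integral>\<^sup>+u. ennreal (trunc_normal_density a b u) \<partial>lborel) = 1"
proof -
  let ?Z = "1 - std_normal_cdf (- a / sqrt b)"
  have Z: "0 < ?Z" using std_normal_cdf_less_1 by simp
  have "(\<integral>\<^sup>+u. ennreal (trunc_normal_density a b u) \<partial>lborel)
      = (\<integral>\<^sup>+u. ennreal (indicator {0<..} u * normal_density a (sqrt b) u) * ennreal (1 / ?Z) \<partial>lborel)"
    unfolding trunc_normal_density_def using Z
    by (intro nn_integral_cong) (simp add: ennreal_mult[symmetric] divide_inverse)
  also have "\<dots> = ennreal ?Z * ennreal (1 / ?Z)"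
    using b by (simp add: nn_integral_multc nn_integral_normal_density_greaterThan_0)
  also have "\<dots> = 1" using Z by (simp add: ennreal_mult[symmetric])
  finally show ?thesis .
qed

lemma prob_space_trunc_normal: "0 < b \<Longrightarrow> prob_space (trunc_normal a b)"
  by (rule prob_spaceI)
     (simp add: trunc_normal_eq_density emeasure_density nn_integral_trunc_normal_density)

lemma AE_trunc_normal_pos: "AE u in trunc_normal a b. 0 < u"
  unfolding trunc_normal_eq_density
  by (subst AE_density) (auto simp: trunc_normal_density_def split: split_indicator)

lemma integrable_trunc_normal_indicator:
  assumes "0 < b" and "B \<in> sets borel"
  shows "integrable (trunc_normal a b) (indicator B :: real \<Rightarrow> real)"
proof -
  interpret prob_space "trunc_normal a b" by (rule prob_space_trunc_normal) fact
  show ?thesis using assms(2) by (simp add: integrable_indicator_iff emeasure_eq_measure)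
qed

lemma
  assumes b: "0 < b"
  shows integrable_trunc_normal_power: "integrable (trunc_normal a b) (\<lambda>u. u ^ k)"
    and integral_trunc_normal_power:
      "(\<integral>u. u ^ k \<partial>trunc_normal a b) = normal_pos_moment a (sqrt b) k / normal_pos_moment a (sqrt b) 0"
proof -
  let ?J = "normal_pos_moment a (sqrt b)"
  have "has_bochner_integral lborel (\<lambda>u. indicator {0<..} u * u ^ k * normal_density a (sqrt b) u) (?J k)"
    unfolding normal_pos_moment_def using b
    by (intro has_bochner_integral_integrable integrable_indicator_power_normal_density) auto
  then have "has_bochner_integral lborel
      (\<lambda>u. indicator {0<..} u * u ^ k * normal_density a (sqrt b) u / ?J 0) (?J k / ?J 0)"
    by (rule has_bochner_integral_divide_zero)
  then have "has_bochner_integral lborel (\<lambda>u. trunc_normal_density a b u *\<^sub>R u ^ k) (?J k / ?J 0)"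
    by (simp add: trunc_normal_density_eq_normal_pos_moment[OF b] ac_simps)
  then have "has_bochner_integral (trunc_normal a b) (\<lambda>u. u ^ k)
      (normal_pos_moment a (sqrt b) k / normal_pos_moment a (sqrt b) 0)"
    unfolding trunc_normal_eq_density
    by (subst has_bochner_integral_density) (auto simp: trunc_normal_density_nonneg)
  then show "integrable (trunc_normal a b) (\<lambda>u. u ^ k)"
    and "(\<integral>u. u ^ k \<partial>trunc_normal a b) = normal_pos_moment a (sqrt b) k / normal_pos_moment a (sqrt b) 0"
    by (simp_all add: has_bochner_integral_iff)
qed

lemma integral_trunc_normal_power_recursion:
  assumes b: "0 < b" and k: "2 \<le> k"
  shows "(\<integral>u. u ^ k \<partial>trunc_normal a b)
       = a * (\<integral>u. u ^ (k - 1) \<partial>trunc_normal a b) + real (k - 1) * b * (\<integral>u. u ^ (k - 2) \<partial>trunc_normal a b)"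
proof -
  obtain j where k: "k = Suc (Suc j)" using k by (metis add_2_eq_Suc le_Suc_ex)
  show ?thesis
    using normal_pos_moment_Suc[of "sqrt b" a "Suc j"] b
    unfolding k integral_trunc_normal_power[OF b] by (simp add: add_divide_distrib)
qed

lemma integral_trunc_normal_mean:
  assumes s: "0 < s"
  shows "(\<integral>u. u \<partial>trunc_normal m (s\<^sup>2))
       = m + s * std_normal_density (m / s) / std_normal_cdf (m / s)"
proof -
  have J0: "normal_pos_moment m s 0 = std_normal_cdf (m / s)"
    using s by (simp add: normal_pos_moment_0 std_normal_cdf_minus)
  have "normal_density m s 0 = std_normal_density (m / s) / s"
    using s by (simp add: normal_density_eq_std_normal_density std_normal_density_def)
  then have "normal_pos_moment m s 1 = m * std_normal_cdf (m / s) + s * std_normal_density (m / s)"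
    using normal_pos_moment_Suc[OF s, of m 0] s J0 by (simp add: power2_eq_square)
  then show ?thesis
    using integral_trunc_normal_power[of "s\<^sup>2" m 1] s J0 std_normal_cdf_pos[of "m / s"]
    by (simp add: field_simps)
qed

section \<open>Conditional laws from a factorised joint density\<close>

lemma nn_integral_indep_shift:
  fixes M :: "'s measure" and U :: "'s \<Rightarrow> real" and Z :: "'s \<Rightarrow> 'a::euclidean_space"
    and T :: "'a \<Rightarrow> 'b::topological_space" and K :: "real \<times> 'b \<Rightarrow> ennreal"
  assumes "prob_space M"
    and [measurable]: "U \<in> borel_measurable M" "Z \<in> borel_measurable M"
    and U: "distr M lborel U = density lborel (\<lambda>u. ennreal (fU u))"
    and Z: "distr M lborel Z = density lborel (\<lambda>z. ennreal (fZ z))"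
    and indep: "distr M (borel \<Otimes>\<^sub>M borel) (\<lambda>s. (U s, Z s)) = distr M borel U \<Otimes>\<^sub>M distr M borel Z"
    and [measurable]: "fU \<in> borel_measurable borel" "fZ \<in> borel_measurable borel"
      "T \<in> borel_measurable borel" "K \<in> borel_measurable (borel \<Otimes>\<^sub>M borel)"
  shows "(\<integral>\<^sup>+s. K (U s, T (U s *\<^sub>R d + Z s)) \<partial>M)
       = (\<integral>\<^sup>+w. \<integral>\<^sup>+u. ennreal (fU u) * ennreal (fZ (w - u *\<^sub>R d)) * K (u, T w) \<partial>lborel \<partial>lborel)"
proof -
  interpret prob_space M by fact
  let ?PU = "density lborel (\<lambda>u. ennreal (fU u))" and ?PZ = "density lborel (\<lambda>z. ennreal (fZ z))"
  have "distr M borel U = ?PU" "distr M borel Z = ?PZ"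
    unfolding U[symmetric] Z[symmetric] by (auto intro: distr_cong)
  then have indep': "distr M (borel \<Otimes>\<^sub>M borel) (\<lambda>s. (U s, Z s)) = ?PU \<Otimes>\<^sub>M ?PZ"
    by (simp add: indep)
  interpret PZ: prob_space ?PZ
    unfolding Z[symmetric] by (rule prob_space_distr) simp
  have "(\<integral>\<^sup>+s. K (U s, T (U s *\<^sub>R d + Z s)) \<partial>M)
      = (\<integral>\<^sup>+x. K (fst x, T (fst x *\<^sub>R d + snd x)) \<partial>(?PU \<Otimes>\<^sub>M ?PZ))"
    unfolding indep'[symmetric] by (subst nn_integral_distr) simp_all
  also have "\<dots> = (\<integral>\<^sup>+u. \<integral>\<^sup>+z. K (u, T (u *\<^sub>R d + z)) \<partial>?PZ \<partial>?PU)"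
    by (subst PZ.nn_integral_fst[symmetric]) simp_all
  also have "\<dots> = (\<integral>\<^sup>+u. ennreal (fU u) * (\<integral>\<^sup>+z. ennreal (fZ z) * K (u, T (u *\<^sub>R d + z)) \<partial>lborel) \<partial>lborel)"
    by (simp add: nn_integral_density PZ.borel_measurable_nn_integral_fst)
  also have "\<dots> = (\<integral>\<^sup>+u. ennreal (fU u) * (\<integral>\<^sup>+w. ennreal (fZ (w - u *\<^sub>R d)) * K (u, T w) \<partial>lborel) \<partial>lborel)"
  proof (intro nn_integral_cong)
    fix u :: real
    have "(\<integral>\<^sup>+w. ennreal (fZ (w - u *\<^sub>R d)) * K (u, T w) \<partial>lborel)
        = (\<integral>\<^sup>+w. ennreal (fZ (w - u *\<^sub>R d)) * K (u, T w) \<partial>distr lborel borel ((+) (u *\<^sub>R d)))"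
      by (simp add: lborel_distr_plus)
    also have "\<dots> = (\<integral>\<^sup>+z. ennreal (fZ z) * K (u, T (u *\<^sub>R d + z)) \<partial>lborel)"
      by (subst nn_integral_distr) simp_all
    finally show "ennreal (fU u) * (\<integral>\<^sup>+z. ennreal (fZ z) * K (u, T (u *\<^sub>R d + z)) \<partial>lborel)
        = ennreal (fU u) * (\<integral>\<^sup>+w. ennreal (fZ (w - u *\<^sub>R d)) * K (u, T w) \<partial>lborel)" by simp
  qed
  also have "\<dots> = (\<integral>\<^sup>+u. \<integral>\<^sup>+w. ennreal (fU u) * ennreal (fZ (w - u *\<^sub>R d)) * K (u, T w) \<partial>lborel \<partial>lborel)"
    by (subst nn_integral_cmult[symmetric]) (simp_all add: mult.assoc)
  also have "\<dots> = (\<integral>\<^sup>+w. \<integral>\<^sup>+u. ennreal (fU u) * ennreal (fZ (w - u *\<^sub>R d)) * K (u, T w) \<partial>lborel \<partial>lborel)"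
    by (rule lborel_pair.Fubini') measurable
  finally show ?thesis .
qed

lemma (in prob_space) sigma_finite_subalgebra_vimage_algebra:
  "Y \<in> measurable M N \<Longrightarrow> sigma_finite_subalgebra M (vimage_algebra (space M) Y N)"
  by (intro finite_measure_subalgebra_is_sigma_finite finite_measure_subalgebra.intro
      finite_measure_subalgebra_axioms.intro finite_measure_axioms)
     (auto simp: subalgebra_def sets_image_in_sets)

lemma (in prob_space) real_cond_exp_vimage_algebra_eqI:
  fixes Y :: "'a \<Rightarrow> 'b::topological_space" and X :: "'a \<Rightarrow> real" and h :: "'b \<Rightarrow> real"
  assumes [measurable]: "Y \<in> borel_measurable M" "X \<in> borel_measurable M"
    and h_measurable[measurable]: "h \<in> borel_measurable borel"
    and X_nonneg: "\<And>s. 0 \<le> X s" and h_nonneg: "\<And>y. 0 \<le> h y"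
    and X_integrable: "integrable M X"
    and eq: "\<And>C. C \<in> sets borel \<Longrightarrow>
      (\<integral>\<^sup>+s. indicator C (Y s) * ennreal (X s) \<partial>M) = (\<integral>\<^sup>+s. indicator C (Y s) * ennreal (h (Y s)) \<partial>M)"
  shows "AE s in M. real_cond_exp M (vimage_algebra (space M) Y borel) X s = h (Y s)"
proof -
  let ?F = "vimage_algebra (space M) Y borel"
  have "(\<integral>\<^sup>+s. ennreal (h (Y s)) \<partial>M) = ennreal (\<integral>s. X s \<partial>M)"
    using eq[of UNIV] nn_integral_eq_integral[OF X_integrable] X_nonneg by simp
  then have h_integrable: "integrable M (\<lambda>s. h (Y s))"
    by (intro integrableI_nonneg) (simp_all add: h_nonneg)
  interpret sigma_finite_subalgebra M ?F
    by (rule sigma_finite_subalgebra_vimage_algebra) simp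
  show ?thesis
  proof (rule real_cond_exp_charact)
    fix A assume "A \<in> sets ?F"
    then obtain C where C[measurable]: "C \<in> sets borel" and A: "A = Y -` C \<inter> space M"
      by (auto simp: sets_vimage_algebra2)
    have A_sets[measurable]: "A \<in> sets M" unfolding A by measurable
    have ind: "indicator A s = indicator C (Y s)" if "s \<in> space M" for s
      using that unfolding A by (simp split: split_indicator)
    have "ennreal (\<integral>s\<in>A. X s \<partial>M) = (\<integral>\<^sup>+s. ennreal (indicator A s *\<^sub>R X s) \<partial>M)"
      unfolding set_lebesgue_integral_def using integrable_mult_indicator[OF A_sets X_integrable]
      by (intro nn_integral_eq_integral[symmetric]) (auto simp: X_nonneg)
    also have "\<dots> = (\<integral>\<^sup>+s. indicator C (Y s) * ennreal (X s) \<partial>M)"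
      by (intro nn_integral_cong) (simp add: ind split: split_indicator)
    also have "\<dots> = (\<integral>\<^sup>+s. indicator C (Y s) * ennreal (h (Y s)) \<partial>M)"
      by (rule eq) fact
    also have "\<dots> = (\<integral>\<^sup>+s. ennreal (indicator A s *\<^sub>R h (Y s)) \<partial>M)"
      by (intro nn_integral_cong) (simp add: ind split: split_indicator)
    also have "\<dots> = ennreal (\<integral>s\<in>A. h (Y s) \<partial>M)"
      unfolding set_lebesgue_integral_def using integrable_mult_indicator[OF A_sets h_integrable]
      by (intro nn_integral_eq_integral) (auto simp: h_nonneg)
    finally show "(\<integral>s\<in>A. X s \<partial>M) = (\<integral>s\<in>A. h (Y s) \<partial>M)"
      by (simp add: set_lebesgue_integral_def X_nonneg h_nonneg integral_nonneg_AE)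
  qed (use X_integrable h_integrable measurable_compose[OF measurable_vimage_algebra1 h_measurable] in auto)
qed

(* Hypothesis joint says that, in the coordinates (w, u) with Y = T w, the pair (U, Y) has density
   g w * q (T w) u with respect to N and lborel; then q y is the density of the law of U given Y = y. *)
lemma real_cond_exp_eq_density_kernel:
  fixes M :: "'s measure" and U :: "'s \<Rightarrow> real" and Y :: "'s \<Rightarrow> 'b::topological_space"
    and N :: "'c measure" and T :: "'c \<Rightarrow> 'b" and q :: "'b \<Rightarrow> real \<Rightarrow> real"
  assumes "prob_space M"
    and [measurable]: "U \<in> borel_measurable M" "Y \<in> borel_measurable M"
    and joint: "\<And>K. K \<in> borel_measurable (borel \<Otimes>\<^sub>M borel) \<Longrightarrow>
      (\<integral>\<^sup>+s. K (U s, Y s) \<partial>M) = (\<integral>\<^sup>+w. \<integral>\<^sup>+u. ennreal (g w) * ennreal (q (T w) u) * K (u, T w) \<partial>lborel \<partial>N)"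
    and q_measurable[measurable]: "(\<lambda>(y, u). q y u) \<in> borel_measurable (borel \<Otimes>\<^sub>M borel)"
    and q_nonneg: "\<And>y u. 0 \<le> q y u"
    and q_total: "\<And>y. (\<integral>\<^sup>+u. ennreal (q y u) \<partial>lborel) = 1"
    and f_measurable[measurable]: "f \<in> borel_measurable borel" and f_nonneg: "\<And>u. 0 \<le> f u"
    and f_integrable: "integrable M (\<lambda>s. f (U s))"
    and f_integrable_q: "\<And>y. integrable (density lborel (\<lambda>u. ennreal (q y u))) f"
  shows "AE s in M. real_cond_exp M (vimage_algebra (space M) Y borel) (\<lambda>s. f (U s)) s
           = (\<integral>u. f u \<partial>density lborel (\<lambda>u. ennreal (q (Y s) u)))"
proof -
  define h where "h y = (\<integral>u. f u \<partial>density lborel (\<lambda>u. ennreal (q y u)))" for y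
  have h_eq: "h y = (\<integral>u. q y u * f u \<partial>lborel)" for y
    unfolding h_def by (subst integral_density) (auto simp: q_nonneg)
  have h_nonneg: "0 \<le> h y" for y
    unfolding h_eq by (intro integral_nonneg_AE AE_I2 mult_nonneg_nonneg q_nonneg f_nonneg)
  have q_f: "(\<integral>\<^sup>+u. ennreal (q y u) * ennreal (f u) \<partial>lborel) = ennreal (h y)" for y
  proof -
    have "(\<integral>\<^sup>+u. ennreal (q y u) * ennreal (f u) \<partial>lborel) = (\<integral>\<^sup>+u. ennreal (f u) \<partial>density lborel (\<lambda>u. ennreal (q y u)))"
      by (subst nn_integral_density) auto
    also have "\<dots> = ennreal (h y)"
      unfolding h_def by (rule nn_integral_eq_integral[OF f_integrable_q]) (simp add: f_nonneg)
    finally show ?thesis .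
  qed
  have kernel: "(\<integral>\<^sup>+u. ennreal (g w) * ennreal (q y u) * (indicator C y * ennreal (f u)) \<partial>lborel)
      = (\<integral>\<^sup>+u. ennreal (g w) * ennreal (q y u) * (indicator C y * ennreal (h y)) \<partial>lborel)" for w y C
  proof -
    have "(\<integral>\<^sup>+u. ennreal (g w) * ennreal (q y u) * (indicator C y * ennreal (f u)) \<partial>lborel)
        = ennreal (g w) * indicator C y * (\<integral>\<^sup>+u. ennreal (q y u) * ennreal (f u) \<partial>lborel)"
      by (subst nn_integral_cmult[symmetric]) (auto simp: ac_simps)
    also have "\<dots> = ennreal (g w) * indicator C y * ennreal (h y) * (\<integral>\<^sup>+u. ennreal (q y u) \<partial>lborel)"
      by (simp add: q_f q_total)
    also have "\<dots> = (\<integral>\<^sup>+u. ennreal (g w) * ennreal (q y u) * (indicator C y * ennreal (h y)) \<partial>lborel)"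
      by (subst nn_integral_cmult[symmetric]) (auto simp: ac_simps)
    finally show ?thesis .
  qed
  show ?thesis
    unfolding h_def[symmetric]
  proof (rule prob_space.real_cond_exp_vimage_algebra_eqI)
    show "h \<in> borel_measurable borel"
      unfolding h_eq by (rule lborel.borel_measurable_lebesgue_integral) measurable
    then show "(\<integral>\<^sup>+s. indicator C (Y s) * ennreal (f (U s)) \<partial>M) = (\<integral>\<^sup>+s. indicator C (Y s) * ennreal (h (Y s)) \<partial>M)"
      if [measurable]: "C \<in> sets borel" for C
      using joint[of "\<lambda>(u, y). indicator C y * ennreal (f u)"] joint[of "\<lambda>(u, y). indicator C y * ennreal (h y)"]
      by (simp add: kernel)
  qed (use assms h_nonneg in auto)
qed

section \<open>Positive definite matrices and inverses\<close>

lemma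
  fixes A :: "'a::field^'n^'n"
  assumes "invertible A"
  shows matrix_inv_left: "matrix_inv A ** A = mat 1"
    and matrix_inv_right: "A ** matrix_inv A = mat 1"
proof -
  have "A ** matrix_inv A = mat 1 \<and> matrix_inv A ** A = mat 1"
    using assms unfolding invertible_def matrix_inv_def by (rule someI_ex)
  then show "matrix_inv A ** A = mat 1" "A ** matrix_inv A = mat 1" by auto
qed

lemma matrix_inv_mult_vector_eqI:
  fixes A :: "'a::field^'n^'n"
  assumes "invertible A" and "A *v x = y"
  shows "matrix_inv A *v y = x"
  using assms by (metis matrix_vector_mul_assoc matrix_inv_left matrix_vector_mul_lid)

lemma transpose_matrix_inv_symmetric:
  fixes A :: "'a::field^'n^'n"
  assumes sym: "transpose A = A" and "invertible A"
  shows "transpose (matrix_inv A) = matrix_inv A"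
proof -
  have left_inv: "transpose (matrix_inv A) ** A = mat 1"
    by (metis sym matrix_transpose_mul matrix_inv_right[OF \<open>invertible A\<close>] transpose_mat)
  have "transpose (matrix_inv A) = transpose (matrix_inv A) ** (A ** matrix_inv A)"
    by (simp add: matrix_inv_right[OF \<open>invertible A\<close>])
  also have "\<dots> = matrix_inv A"
    by (simp add: matrix_mul_assoc left_inv)
  finally show ?thesis .
qed

lemma matrix_diff_ldistrib: "(A::'a::ring_1^'n^'m) ** (B - C) = A ** B - A ** C"
  by (simp add: matrix_matrix_mult_def vec_eq_iff sum_subtractf right_diff_distrib)

lemma matrix_diff_rdistrib: "(B - C) ** (A::'a::ring_1^'n^'m) = B ** A - C ** A"
  by (simp add: matrix_matrix_mult_def vec_eq_iff sum_subtractf left_diff_distrib)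

lemma inner_matrix_vector_symmetric:
  fixes S :: "real^'n^'n"
  assumes "transpose S = S"
  shows "x \<bullet> (S *v y) = y \<bullet> (S *v x)"
  by (metis assms dot_lmul_matrix inner_commute transpose_matrix_vector)

lemma pos_def_mat_invertible:
  fixes S :: "real^'n^'n"
  assumes "pos_def_mat S"
  shows "invertible S"
proof -
  have "\<forall>x. S *v x = 0 \<longrightarrow> x = 0"
    using assms unfolding pos_def_mat_def by force
  then show ?thesis
    using matrix_left_invertible_ker invertible_left_inverse by blast
qed

lemma pos_def_mat_inverse_quadratic_pos:
  fixes S :: "real^'n^'n"
  assumes S: "pos_def_mat S" and "d \<noteq> 0"
  shows "0 < d \<bullet> (matrix_inv S *v d)"
proof -
  let ?v = "matrix_inv S *v d"
  have Sv: "S *v ?v = d"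
    by (simp add: matrix_vector_mul_assoc matrix_inv_right[OF pos_def_mat_invertible[OF S]])
  then have "?v \<noteq> 0" using \<open>d \<noteq> 0\<close> by auto
  then have "0 < ?v \<bullet> (S *v ?v)" using S unfolding pos_def_mat_def by blast
  then show ?thesis by (simp add: Sv inner_commute)
qed

lemma pos_def_mat_diag_pos:
  assumes "pos_def_mat (S::real^'n^'n)"
  shows "0 < S $ i $ i"
proof -
  have "0 < axis i 1 \<bullet> (S *v axis i 1)"
    using assms unfolding pos_def_mat_def by (simp add: axis_eq_0_iff)
  also have "axis i 1 \<bullet> (S *v axis i 1) = S $ i $ i"
    by (simp add: inner_vec_def axis_def matrix_vector_mult_def if_distrib if_distribR cong: if_cong)
  finally show ?thesis .
qed

lemma transpose_omega_diag: "transpose (omega_diag S) = omega_diag S"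
  by (simp add: omega_diag_def transpose_def vec_eq_iff)

lemma omega_diag_invertible:
  assumes "pos_def_mat (S::real^'n^'n)"
  shows "invertible (omega_diag S)"
proof -
  have "x = 0" if "omega_diag S *v x = 0" for x :: "real^'n"
  proof -
    have "sqrt (S $ i $ i) * x $ i = 0" for i
      using arg_cong[OF that, of "\<lambda>v. v $ i"]
      by (simp add: omega_diag_def matrix_vector_mult_def if_distrib if_distribR cong: if_cong)
    then show "x = 0"
      using pos_def_mat_diag_pos[OF assms] by (simp add: vec_eq_iff) (metis less_irrefl)
  qed
  then show ?thesis
    using matrix_left_invertible_ker invertible_left_inverse by blast
qed

lemma omega_diag_corr_mat:
  assumes "pos_def_mat \<Omega>"
  shows "omega_diag \<Omega> ** corr_mat \<Omega> ** omega_diag \<Omega> = \<Omega>"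
proof -
  let ?w = "omega_diag \<Omega>"
  have "?w ** corr_mat \<Omega> ** ?w = (?w ** matrix_inv ?w) ** \<Omega> ** (matrix_inv ?w ** ?w)"
    by (simp add: corr_mat_def matrix_mul_assoc)
  then show ?thesis
    by (simp add: matrix_inv_left matrix_inv_right omega_diag_invertible[OF assms])
qed

lemma inner_matrix_inv_congruence:
  fixes W S :: "real^'n^'n"
  assumes "transpose W = W" and W: "invertible W" and S: "invertible S"
  shows "(W *v x) \<bullet> (matrix_inv (W ** S ** W) *v y) = x \<bullet> (matrix_inv S *v (matrix_inv W *v y))"
proof -
  let ?z = "matrix_inv S *v (matrix_inv W *v y)"
  have "A *v (matrix_inv A *v v) = v" if "invertible A" for A :: "real^'n^'n" and v
    by (simp add: matrix_vector_mul_assoc matrix_inv_right[OF that])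
  then have "(W ** S ** W) *v (matrix_inv W *v ?z) = y"
    using W S by (simp add: matrix_vector_mul_assoc[symmetric])
  then have "matrix_inv (W ** S ** W) *v y = matrix_inv W *v ?z"
    by (intro matrix_inv_mult_vector_eqI invertible_mult W S)
  moreover have "(W *v x) \<bullet> (matrix_inv W *v v) = x \<bullet> v" for v
    using matrix_inv_right[OF W] \<open>transpose W = W\<close>
    by (metis dot_lmul_matrix vector_matrix_mul_assoc vector_matrix_mul_rid vector_transpose_matrix)
  ultimately show ?thesis by simp
qed

lemma inner_matrix_inv_omega_diag_corr_mat:
  assumes "pos_def_mat \<Omega>" and "pos_def_mat (corr_mat \<Omega> - outer d d)"
  shows "(omega_diag \<Omega> *v d) \<bullet> (matrix_inv (\<Omega> - omega_diag \<Omega> ** outer d d ** omega_diag \<Omega>) *v v)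
       = d \<bullet> (matrix_inv (corr_mat \<Omega> - outer d d) *v (matrix_inv (omega_diag \<Omega>) *v v))"
proof -
  have "\<Omega> - omega_diag \<Omega> ** outer d d ** omega_diag \<Omega> = omega_diag \<Omega> ** (corr_mat \<Omega> - outer d d) ** omega_diag \<Omega>"
    by (simp add: matrix_diff_ldistrib matrix_diff_rdistrib omega_diag_corr_mat[OF assms(1)])
  then show ?thesis
    using assms by (simp add: inner_matrix_inv_congruence transpose_omega_diag omega_diag_invertible pos_def_mat_invertible)
qed

lemma borel_measurable_matrix_vector_mult[measurable]:
  "(\<lambda>x. (A::real^'n^'m) *v x) \<in> borel_measurable borel"
  by (intro borel_measurable_continuous_onI continuous_intros)

section \<open>The normal mean mixture with exponential mixing\<close>

lemma exp_times_gaussian_eq_trunc_normal_density: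
  fixes d e q u :: real
  assumes e: "0 < e"
  shows "indicator {0<..} u * exp (- u) * exp (- (q - 2 * u * d + u\<^sup>2 * e) / 2)
       = exp ((d - 1)\<^sup>2 / (2 * e) - q / 2) * std_normal_cdf ((d - 1) / sqrt e) * sqrt (2 * pi) / sqrt e
         * trunc_normal_density ((d - 1) / e) (1 / e) u"
proof (cases "0 < u")
  case False
  then show ?thesis by (simp add: trunc_normal_density_def)
next
  case True
  let ?a = "(d - 1) / e"
  obtain r where r: "0 < r" "e = r\<^sup>2" using e by (metis real_sqrt_gt_0_iff real_sqrt_pow2 less_imp_le)
  then have sqrt_e: "sqrt e = r" by simp
  have "normal_density ?a (sqrt (1 / e)) u = sqrt e / sqrt (2 * pi) * exp (- e * (u - ?a)\<^sup>2 / 2)"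
    using r by (simp add: sqrt_e normal_density_def real_sqrt_divide real_sqrt_mult field_simps)
  moreover have "- ?a / sqrt (1 / e) = - ((d - 1) / sqrt e)"
    using r by (simp add: sqrt_e real_sqrt_divide field_simps power2_eq_square)
  then have "1 - std_normal_cdf (- ?a / sqrt (1 / e)) = std_normal_cdf ((d - 1) / sqrt e)"
    by (simp only: std_normal_cdf_minus)
  ultimately have tnd: "trunc_normal_density ?a (1 / e) u
      = sqrt e / sqrt (2 * pi) * exp (- e * (u - ?a)\<^sup>2 / 2) / std_normal_cdf ((d - 1) / sqrt e)"
    using True by (simp add: trunc_normal_density_def)
  have "- u + - (q - 2 * u * d + u\<^sup>2 * e) / 2 = ((d - 1)\<^sup>2 / (2 * e) - q / 2) + - e * (u - ?a)\<^sup>2 / 2"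
    using e by (simp add: field_simps power2_eq_square)
  then have "exp (- u) * exp (- (q - 2 * u * d + u\<^sup>2 * e) / 2)
      = exp ((d - 1)\<^sup>2 / (2 * e) - q / 2) * exp (- e * (u - ?a)\<^sup>2 / 2)"
    by (simp flip: exp_add)
  then show ?thesis
    using True e std_normal_cdf_pos[of "(d - 1) / sqrt e"] by (simp add: tnd)
qed

lemma exp_times_mvn_density_factorization:
  fixes S :: "real^'n^'n" and d w :: "real^'n"
  assumes S: "pos_def_mat S" and "0 < det S" and "d \<noteq> 0"
  shows "\<exists>G\<ge>0. \<forall>u. indicator {0<..} u * exp (- u) * mvn_density 0 S (w - u *\<^sub>R d)
    = G * trunc_normal_density ((d \<bullet> (matrix_inv S *v w) - 1) / (d \<bullet> (matrix_inv S *v d)))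
            (1 / (d \<bullet> (matrix_inv S *v d))) u"
proof -
  let ?P = "matrix_inv S" and ?c = "sqrt ((2 * pi) ^ CARD('n) * det S)"
  let ?e = "d \<bullet> (?P *v d)" and ?x = "d \<bullet> (?P *v w)" and ?q = "w \<bullet> (?P *v w)"
  have e: "0 < ?e" by (rule pos_def_mat_inverse_quadratic_pos) fact+
  have "transpose ?P = ?P"
    using S by (intro transpose_matrix_inv_symmetric pos_def_mat_invertible) (simp_all add: pos_def_mat_def)
  then have "(w - u *\<^sub>R d) \<bullet> (?P *v (w - u *\<^sub>R d)) = ?q - 2 * u * ?x + u\<^sup>2 * ?e" for u
    using inner_matrix_vector_symmetric[of ?P w d]
    by (simp add: matrix_vector_mult_diff_distrib matrix_vector_mult_scaleR inner_diff_left inner_diff_right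
        algebra_simps power2_eq_square)
  then have mvn: "mvn_density 0 S (w - u *\<^sub>R d) = exp (- (?q - 2 * u * ?x + u\<^sup>2 * ?e) / 2) / ?c" for u
    by (simp add: mvn_density_def)
  define G where "G = exp ((?x - 1)\<^sup>2 / (2 * ?e) - ?q / 2) * std_normal_cdf ((?x - 1) / sqrt ?e)
    * sqrt (2 * pi) / sqrt ?e / ?c"
  show ?thesis
  proof (intro exI[of _ G] conjI allI)
    show "0 \<le> G"
      unfolding G_def using std_normal_cdf_pos[of "(?x - 1) / sqrt ?e"] \<open>0 < det S\<close> e
      by (intro divide_nonneg_nonneg mult_nonneg_nonneg) simp_all
    fix u
    have "indicator {0<..} u * exp (- u) * mvn_density 0 S (w - u *\<^sub>R d)
        = indicator {0<..} u * exp (- u) * exp (- (?q - 2 * u * ?x + u\<^sup>2 * ?e) / 2) / ?c"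
      by (simp add: mvn)
    also have "\<dots> = G * trunc_normal_density ((?x - 1) / ?e) (1 / ?e) u"
      unfolding exp_times_gaussian_eq_trunc_normal_density[OF e] G_def by simp
    finally show "indicator {0<..} u * exp (- u) * mvn_density 0 S (w - u *\<^sub>R d)
        = G * trunc_normal_density ((?x - 1) / ?e) (1 / ?e) u" .
  qed
qed

(* The matrix L plays the role of omega; cond_loc y and 1 / cond_prec are the location A / eta and the
   variance 1 / eta^2 of the conditional truncated normal law. *)
locale exp_normal_mixture = prob_space M
  for M :: "'s measure" and U :: "'s \<Rightarrow> real" and Z :: "'s \<Rightarrow> real^'p"
    and \<xi> \<delta> :: "real^'p" and L S :: "real^'p^'p" +
  assumes U_measurable[measurable]: "U \<in> borel_measurable M"
    and Z_measurable[measurable]: "Z \<in> borel_measurable M"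
    and U_exponential: "distr M lborel U = density lborel (\<lambda>u. ennreal (indicator {0<..} u * exp (- u)))"
    and Z_normal: "distr M lborel Z = density lborel (\<lambda>z. ennreal (mvn_density 0 S z))"
    and U_Z_indep: "distr M (borel \<Otimes>\<^sub>M borel) (\<lambda>s. (U s, Z s)) = distr M borel U \<Otimes>\<^sub>M distr M borel Z"
    and S_pos_def: "pos_def_mat S"
    and \<delta>_nonzero: "\<delta> \<noteq> 0"
    and L_invertible: "invertible L"
begin

definition observation :: "'s \<Rightarrow> real^'p" where
  "observation s = \<xi> + L *v (U s *\<^sub>R \<delta> + Z s)"

lemma observation_measurable[measurable]: "observation \<in> borel_measurable M"
  unfolding observation_def[abs_def] by measurable

definition cond_prec :: real where
  "cond_prec = \<delta> \<bullet> (matrix_inv S *v \<delta>)"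

definition cond_loc :: "real^'p \<Rightarrow> real" where
  "cond_loc y = (\<delta> \<bullet> (matrix_inv S *v (matrix_inv L *v (y - \<xi>))) - 1) / cond_prec"

lemma cond_prec_pos: "0 < cond_prec"
  unfolding cond_prec_def by (rule pos_def_mat_inverse_quadratic_pos[OF S_pos_def \<delta>_nonzero])

(* det S > 0 is read off from Z_normal: otherwise the normalising constant sqrt (...) of mvn_density
   would be nonpositive (sqrt is odd on the reals) and the density could not integrate to 1. *)
lemma det_S_pos: "0 < det S"
proof (rule ccontr)
  assume "\<not> 0 < det S"
  then have "mvn_density 0 S z \<le> 0" for z
    unfolding mvn_density_def by (intro divide_nonneg_nonpos) (auto simp: mult_nonneg_nonpos)
  then have "emeasure (distr M lborel Z) UNIV = 0"
    unfolding Z_normal by (simp add: emeasure_density ennreal_neg)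
  moreover have "prob_space (distr M lborel Z)"
    by (rule prob_space_distr) simp
  ultimately show False
    using prob_space.emeasure_space_1 by fastforce
qed

lemma U_pos: "AE s in M. 0 < U s"
proof -
  have "AE u in distr M lborel U. 0 < u"
    unfolding U_exponential by (subst AE_density) (auto split: split_indicator)
  then show ?thesis by (subst (asm) AE_distr_iff) auto
qed

lemma integrable_U_power: "integrable M (\<lambda>s. U s ^ k)"
proof (rule erlang_ith_moment_integrable)
  have "density lborel (\<lambda>u. ennreal (indicator {0<..} u * exp (- u)))
      = density lborel (\<lambda>u. ennreal (exponential_density 1 u))"
    by (intro density_cong AE_I[where N="{0}"]) (auto simp: exponential_density_def split: split_indicator)
  then show "distributed M lborel U (\<lambda>u. ennreal (exponential_density 1 u))"
    unfolding distributed_def U_exponential[symmetric] by simp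
qed simp

lemma joint_density_factorization:
  obtains g where "\<And>w. 0 \<le> g w"
    and "\<And>u w. indicator {0<..} u * exp (- u) * mvn_density 0 S (w - u *\<^sub>R \<delta>)
      = g w * trunc_normal_density (cond_loc (\<xi> + L *v w)) (1 / cond_prec) u"
proof -
  have cond_loc: "cond_loc (\<xi> + L *v w) = (\<delta> \<bullet> (matrix_inv S *v w) - 1) / cond_prec" for w
    by (simp add: cond_loc_def matrix_vector_mul_assoc matrix_inv_left[OF L_invertible])
  have "\<exists>G\<ge>0. \<forall>u. indicator {0<..} u * exp (- u) * mvn_density 0 S (w - u *\<^sub>R \<delta>)
      = G * trunc_normal_density (cond_loc (\<xi> + L *v w)) (1 / cond_prec) u" for w
    using exp_times_mvn_density_factorization[OF S_pos_def det_S_pos \<delta>_nonzero]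
    unfolding cond_loc cond_prec_def .
  then obtain g where "\<forall>w. 0 \<le> g w \<and> (\<forall>u. indicator {0<..} u * exp (- u) * mvn_density 0 S (w - u *\<^sub>R \<delta>)
      = g w * trunc_normal_density (cond_loc (\<xi> + L *v w)) (1 / cond_prec) u)"
    using choice[of "\<lambda>w G. 0 \<le> G \<and> (\<forall>u. indicator {0<..} u * exp (- u) * mvn_density 0 S (w - u *\<^sub>R \<delta>)
      = G * trunc_normal_density (cond_loc (\<xi> + L *v w)) (1 / cond_prec) u)"] by blast
  then show ?thesis
    by (intro that[of g]) simp_all
qed

lemma real_cond_exp_eq_trunc_normal:
  assumes [measurable]: "f \<in> borel_measurable borel" and "\<And>u. 0 \<le> f u"
    and "integrable M (\<lambda>s. f (U s))"
    and "\<And>y. integrable (trunc_normal (cond_loc y) (1 / cond_prec)) f"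
  shows "AE s in M. real_cond_exp M (vimage_algebra (space M) observation borel) (\<lambda>s. f (U s)) s
           = (\<integral>u. f u \<partial>trunc_normal (cond_loc (observation s)) (1 / cond_prec))"
proof -
  obtain g where g_nonneg: "\<And>w. 0 \<le> g w"
    and factor: "\<And>u w. indicator {0<..} u * exp (- u) * mvn_density 0 S (w - u *\<^sub>R \<delta>)
      = g w * trunc_normal_density (cond_loc (\<xi> + L *v w)) (1 / cond_prec) u"
    using joint_density_factorization by blast
  have mvn_nonneg: "0 \<le> mvn_density 0 S z" for z
    using det_S_pos by (simp add: mvn_density_def)
  have [measurable]: "cond_loc \<in> borel_measurable borel"
    unfolding cond_loc_def by measurable
  have [measurable]: "mvn_density 0 S \<in> borel_measurable borel"
    unfolding mvn_density_def by measurable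
  show ?thesis
    unfolding trunc_normal_eq_density
  proof (rule real_cond_exp_eq_density_kernel[where N=lborel and T="\<lambda>w. \<xi> + L *v w" and g=g])
    fix K :: "real \<times> (real^'p) \<Rightarrow> ennreal" assume [measurable]: "K \<in> borel_measurable (borel \<Otimes>\<^sub>M borel)"
    have "(\<integral>\<^sup>+s. K (U s, observation s) \<partial>M)
        = (\<integral>\<^sup>+w. \<integral>\<^sup>+u. ennreal (indicator {0<..} u * exp (- u)) * ennreal (mvn_density 0 S (w - u *\<^sub>R \<delta>))
            * K (u, \<xi> + L *v w) \<partial>lborel \<partial>lborel)"
      unfolding observation_def
      by (rule nn_integral_indep_shift[OF prob_space_axioms U_measurable Z_measurable U_exponential Z_normal U_Z_indep])
         measurable
    also have "\<dots> = (\<integral>\<^sup>+w. \<integral>\<^sup>+u. ennreal (g w) * ennreal (trunc_normal_density (cond_loc (\<xi> + L *v w)) (1 / cond_prec) u)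
            * K (u, \<xi> + L *v w) \<partial>lborel \<partial>lborel)"
      using mvn_nonneg g_nonneg trunc_normal_density_nonneg
      by (simp add: ennreal_mult[symmetric] factor split: split_indicator)
    finally show "(\<integral>\<^sup>+s. K (U s, observation s) \<partial>M) = \<dots>" .
  qed (use assms cond_prec_pos in \<open>simp_all add: observation_def trunc_normal_density_nonneg
    nn_integral_trunc_normal_density trunc_normal_eq_density[symmetric] prob_space_axioms\<close>)
qed

lemma real_cond_exp_indicator:
  assumes [measurable]: "B \<in> sets borel"
  shows "AE s in M. real_cond_exp M (vimage_algebra (space M) observation borel) (\<lambda>s. indicator B (U s)) s
           = measure (trunc_normal (cond_loc (observation s)) (1 / cond_prec)) B"
proof -
  have "integrable M (\<lambda>s. indicator B (U s) :: real)"
    by (intro integrable_const_bound[where B=1]) (auto split: split_indicator)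
  then show ?thesis
    using real_cond_exp_eq_trunc_normal[of "indicator B"] cond_prec_pos
    by (simp add: integrable_trunc_normal_indicator)
qed

lemma real_cond_exp_power:
  "AE s in M. real_cond_exp M (vimage_algebra (space M) observation borel) (\<lambda>s. U s ^ k) s
     = (\<integral>u. u ^ k \<partial>trunc_normal (cond_loc (observation s)) (1 / cond_prec))"
proof -
  let ?F = "vimage_algebra (space M) observation borel" and ?f = "\<lambda>u. indicator {0<..} u * u ^ k"
  interpret sigma_finite_subalgebra M ?F
    by (rule sigma_finite_subalgebra_vimage_algebra) simp
  have ae: "AE s in M. U s ^ k = ?f (U s)"
    using U_pos by eventually_elim simp
  moreover have "integrable M (\<lambda>s. ?f (U s))"
    using integrable_U_power[of k] _ ae by (rule integrable_cong_AE_imp) simp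
  ultimately have "AE s in M. real_cond_exp M ?F (\<lambda>s. U s ^ k) s = real_cond_exp M ?F (\<lambda>s. ?f (U s)) s"
    by (intro real_cond_exp_cong) simp_all
  moreover have "AE s in M. real_cond_exp M ?F (\<lambda>s. ?f (U s)) s
      = (\<integral>u. ?f u \<partial>trunc_normal (cond_loc (observation s)) (1 / cond_prec))"
  proof (rule real_cond_exp_eq_trunc_normal)
    show "integrable (trunc_normal y (1 / cond_prec)) ?f" for y
      using integrable_mult_indicator[of "{0<..}" "trunc_normal y (1 / cond_prec)" "\<lambda>u. u ^ k"]
        integrable_trunc_normal_power[of "1 / cond_prec" y k] cond_prec_pos by simp
  qed (use \<open>integrable M (\<lambda>s. ?f (U s))\<close> in \<open>auto split: split_indicator\<close>)
  moreover have "(\<integral>u. ?f u \<partial>trunc_normal a b) = (\<integral>u. u ^ k \<partial>trunc_normal a b)" for a b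
    using AE_trunc_normal_pos[of a b] by (intro integral_cong_AE) auto
  ultimately show ?thesis by auto
qed

end

theorem theorem8:
  fixes M :: "'s measure"
    and U :: "'s \<Rightarrow> real" and Z :: "'s \<Rightarrow> real^'p"
    and \<xi> \<delta> :: "real^'p" and \<Omega> :: "real^'p^'p"
  defines "\<omega> \<equiv> omega_diag \<Omega>"
  defines "Y \<equiv> (\<lambda>s. \<xi> + \<omega> *v (U s *\<^sub>R \<delta> + Z s))"
  defines "\<Sigma>Y \<equiv> \<Omega> - \<omega> ** outer \<delta> \<delta> ** \<omega>"
  defines "\<eta> \<equiv> sqrt ((\<omega> *v \<delta>) \<bullet> (matrix_inv \<Sigma>Y *v (\<omega> *v \<delta>)))"
  defines "A \<equiv> (\<lambda>y. ((\<omega> *v \<delta>) \<bullet> (matrix_inv \<Sigma>Y *v (y - \<xi>)) - 1) / \<eta>)"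
  defines "F \<equiv> vimage_algebra (space M) Y borel"
  assumes P: "prob_space M"
    and posdef: "pos_def_mat \<Omega>"
    and cov: "pos_def_mat (corr_mat \<Omega> - outer \<delta> \<delta>)"
    and dnz: "\<delta> \<noteq> 0"
    and U_rv: "U \<in> borel_measurable M"
    and Z_rv: "Z \<in> borel_measurable M"
    and U_exp: "distr M lborel U = density lborel (\<lambda>u. ennreal (indicator {0<..} u * exp (- u)))"
    and Z_norm: "distr M lborel Z =
                   density lborel (\<lambda>z. ennreal (mvn_density 0 (corr_mat \<Omega> - outer \<delta> \<delta>) z))"
    and indep: "distr M (borel \<Otimes>\<^sub>M borel) (\<lambda>s. (U s, Z s))
                 = distr M borel U \<Otimes>\<^sub>M distr M borel Z"
  shows "(\<forall>B \<in> sets borel. AE s in M.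
            real_cond_exp M F (\<lambda>s. indicator B (U s)) s
              = measure (trunc_normal (A (Y s) / \<eta>) (1 / \<eta>\<^sup>2)) B)
       \<and> (AE s in M. real_cond_exp M F U s
              = (A (Y s) + std_normal_density (A (Y s)) / std_normal_cdf (A (Y s))) / \<eta>)
       \<and> (\<forall>k::nat. k \<ge> 2 \<longrightarrow> (AE s in M.
            real_cond_exp M F (\<lambda>s. U s ^ k) s
              = A (Y s) / \<eta> * real_cond_exp M F (\<lambda>s. U s ^ (k - 1)) s
                + real (k - 1) / \<eta>\<^sup>2 * real_cond_exp M F (\<lambda>s. U s ^ (k - 2)) s))"
proof -
  let ?S = "corr_mat \<Omega> - outer \<delta> \<delta>"
  have \<omega>_inv: "invertible \<omega>"
    unfolding \<omega>_def by (rule omega_diag_invertible[OF posdef])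
  interpret exp_normal_mixture M U Z \<xi> \<delta> \<omega> ?S
    using P U_rv Z_rv U_exp Z_norm indep cov dnz \<omega>_inv
    by (simp add: exp_normal_mixture_def exp_normal_mixture_axioms_def)
  have quad: "(\<omega> *v \<delta>) \<bullet> (matrix_inv \<Sigma>Y *v v) = \<delta> \<bullet> (matrix_inv ?S *v (matrix_inv \<omega> *v v))" for v
    unfolding \<Sigma>Y_def \<omega>_def by (rule inner_matrix_inv_omega_diag_corr_mat[OF posdef cov])
  have \<eta>: "\<eta> = sqrt cond_prec"
    unfolding \<eta>_def quad cond_prec_def by (simp add: matrix_vector_mul_assoc matrix_inv_left[OF \<omega>_inv])
  have \<eta>_pos: "0 < \<eta>"
    using \<eta> cond_prec_pos by simp
  have TN: "trunc_normal (cond_loc y) (1 / cond_prec) = trunc_normal (A y / \<eta>) (1 / \<eta>\<^sup>2)" for y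
    using cond_prec_pos unfolding A_def quad \<eta> cond_loc_def by (simp add: power2_eq_square)
  have F: "F = vimage_algebra (space M) observation borel" and Y: "observation = Y"
    unfolding Y_def F_def observation_def[abs_def] by simp_all
  have moments: "AE s in M. real_cond_exp M F (\<lambda>s. U s ^ k) s
      = (\<integral>u. u ^ k \<partial>trunc_normal (A (Y s) / \<eta>) (1 / \<eta>\<^sup>2))" for k
    using real_cond_exp_power[of k] unfolding F Y TN .
  have mean: "(\<integral>u. u \<partial>trunc_normal (A y / \<eta>) (1 / \<eta>\<^sup>2))
      = (A y + std_normal_density (A y) / std_normal_cdf (A y)) / \<eta>" for y
    using integral_trunc_normal_mean[of "1 / \<eta>" "A y / \<eta>"] \<eta>_pos by (simp add: power_one_over field_simps)
  have "AE s in M. real_cond_exp M F (\<lambda>s. U s ^ k) s = A (Y s) / \<eta> * real_cond_exp M F (\<lambda>s. U s ^ (k - 1)) s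
      + real (k - 1) / \<eta>\<^sup>2 * real_cond_exp M F (\<lambda>s. U s ^ (k - 2)) s" if "2 \<le> k" for k
  proof -
    have rec: "(\<integral>u. u ^ k \<partial>trunc_normal a (1 / \<eta>\<^sup>2)) = a * (\<integral>u. u ^ (k - 1) \<partial>trunc_normal a (1 / \<eta>\<^sup>2))
        + real (k - 1) / \<eta>\<^sup>2 * (\<integral>u. u ^ (k - 2) \<partial>trunc_normal a (1 / \<eta>\<^sup>2))" for a
      using integral_trunc_normal_power_recursion[OF _ that, of "1 / \<eta>\<^sup>2" a] \<eta>_pos by simp
    show ?thesis
      using moments[of k] moments[of "k - 1"] moments[of "k - 2"] by eventually_elim (simp add: rec)
  qed
  then show ?thesis
    using real_cond_exp_indicator moments[of 1] unfolding F Y TN by (simp add: mean)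
qed

end
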